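(* Let $$\tilde{\mathcal{K}}_1(x,y)=\prod_{m=1}^N\prod_{n=1}^{N-1}[2\cosh(\mu(x_m-y_n)/2)]^{-g/\hbar},\qquad x\in\mathbb{R}^N,\ y\in\mathbb{R}^{N-1}.$$ Then $$:\hat\Sigma_N(L_{\rm nr}+E)(x):\ \tilde{\mathcal{K}}_1(x,y)=0,$$ and for $k=1,\ldots,N-1$, $$\Big(:\hat\Sigma_k(L_{\rm nr}+E)(x):-:\hat\Sigma_k(L_{\rm nr}+E)(-y):\Big)\tilde{\mathcal{K}}_1(x,y)=0,$$ for $x,y$ with pairwise distinct coordinates.
   Context: Fix $\hbar,\mu,g>0$. For $n$ variables $x=(x_1,\ldots,x_n)$ and momenta $p$, let $L_{\rm nr}(x,p)_{jk}=\delta_{jk}p_j+(1-\delta_{jk})\frac{i\mu g}{2\sinh(\mu(x_j-x_k)/2)}$ and $E(x)=\mathrm{diag}(z_1(x),\ldots,z_n(x))$ with $z_j(x)=-\frac{i\mu g}{2}\sum_{k\ne j}\coth(\mu(x_j-x_k)/2)$. $\Sigma_k(M)$ is the sum of the principal $k\times k$ minors of $M$. The operator $:\hat\Sigma_k(L_{\rm nr}+E)(x):$ is obtained from $\Sigma_k(L_{\rm nr}(x,p)+E(x))$ by writing $x$-dependent coefficients to the left of monomials in $p$ and substituting $p_m\to-i\hbar\partial_{x_m}$. The operator $:\hat\Sigma_k(L_{\rm nr}+E)(-y):$ (in the $N-1$ variables $y$) is obtained from the one in variables $x=(x_1,\ldots,x_{N-1})$ by the substitution $x=-y$ (coefficients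 evaluated at $-y$, $\partial_{x_m}$ replaced by $-\partial_{y_m}$). *)

theory Defs
  imports "HOL-Analysis.Analysis"
begin

text \<open>Points of R^n are represented as functions nat => real; only the
coordinates 0..n-1 are used (0-based indexing of the paper's x_1..x_n).\<close>

definition coth :: "real \<Rightarrow> real" where
  "coth t = cosh t / sinh t"

text \<open>Off-diagonal entries of L_nr (they do not involve momenta).\<close>
definition Lnr_off :: "real \<Rightarrow> real \<Rightarrow> (nat \<Rightarrow> real) \<Rightarrow> nat \<Rightarrow> nat \<Rightarrow> complex" where
  "Lnr_off mu g x j l =
     \<i> * complex_of_real (mu * g) / complex_of_real (2 * sinh (mu * (x j - x l) / 2))"

definition zE :: "real \<Rightarrow> real \<Rightarrow> nat \<Rightarrow> (nat \<Rightarrow> real) \<Rightarrow> nat \<Rightarrow> complex" where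
  "zE mu g n x j =
     - (\<i> * complex_of_real (mu * g) / 2) *
       (\<Sum>l\<in>{..<n} - {j}. complex_of_real (coth (mu * (x j - x l) / 2)))"

definition pdiff :: "nat \<Rightarrow> ((nat \<Rightarrow> real) \<Rightarrow> complex) \<Rightarrow> (nat \<Rightarrow> real) \<Rightarrow> complex" where
  "pdiff j f x = vector_derivative (\<lambda>t. f (x(j := t))) (at (x j))"

definition pdiffs :: "nat set \<Rightarrow> ((nat \<Rightarrow> real) \<Rightarrow> complex) \<Rightarrow> (nat \<Rightarrow> real) \<Rightarrow> complex" where
  "pdiffs S f = foldr pdiff (sorted_list_of_set S) f"

text \<open>Sigma_k(L_nr(x,p)+E(x)) = sum over k-subsets I of the Leibniz expansion of the
principal minor on I.  The diagonal entry j is p_j + z_j(x); expanding, each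
term is a squarefree monomial prod_{j in S} p_j (S a set of fixed points of the
permutation) with x-dependent coefficient.  sigma_coeff n k S x is the total
coefficient of the monomial prod_{j in S} p_j.\<close>
definition sigma_coeff :: "real \<Rightarrow> real \<Rightarrow> nat \<Rightarrow> nat \<Rightarrow> nat set \<Rightarrow> (nat \<Rightarrow> real) \<Rightarrow> complex" where
  "sigma_coeff mu g n k S x =
     (\<Sum>I\<in>{I. I \<subseteq> {..<n} \<and> card I = k \<and> S \<subseteq> I}.
        \<Sum>\<sigma>\<in>{\<sigma>. \<sigma> permutes I \<and> (\<forall>j\<in>S. \<sigma> j = j)}.
          of_int (sign \<sigma>) *
          (\<Prod>j\<in>I - S. if \<sigma> j = j then zE mu g n x j else Lnr_off mu g x j (\<sigma> j)))"

text \<open>The normal ordered operator :Sigma_k(L_nr+E)(x): (coefficients to the left,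
p_m -> -i hbar d/dx_m), applied to f and evaluated at x.\<close>
definition sigma_op ::
  "real \<Rightarrow> real \<Rightarrow> real \<Rightarrow> nat \<Rightarrow> nat \<Rightarrow> ((nat \<Rightarrow> real) \<Rightarrow> complex) \<Rightarrow> (nat \<Rightarrow> real) \<Rightarrow> complex" where
  "sigma_op hb mu g n k f x =
     (\<Sum>S\<in>Pow {..<n}. sigma_coeff mu g n k S x * (- \<i> * complex_of_real hb) ^ card S * pdiffs S f x)"

text \<open>The operator :Sigma_k(L_nr+E)(-y): : coefficients evaluated at -y and
d/dx_m replaced by -d/dy_m.\<close>
definition sigma_op_neg ::
  "real \<Rightarrow> real \<Rightarrow> real \<Rightarrow> nat \<Rightarrow> nat \<Rightarrow> ((nat \<Rightarrow> real) \<Rightarrow> complex) \<Rightarrow> (nat \<Rightarrow> real) \<Rightarrow> complex" where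
  "sigma_op_neg hb mu g n k f y =
     (\<Sum>S\<in>Pow {..<n}. sigma_coeff mu g n k S (\<lambda>j. - y j) * (- \<i> * complex_of_real hb) ^ card S
         * (-1) ^ card S * pdiffs S f y)"

definition K1 :: "real \<Rightarrow> real \<Rightarrow> real \<Rightarrow> nat \<Rightarrow> (nat \<Rightarrow> real) \<Rightarrow> (nat \<Rightarrow> real) \<Rightarrow> complex" where
  "K1 hb mu g N x y =
     complex_of_real (\<Prod>m<N. \<Prod>n<N - 1. (2 * cosh (mu * (x m - y n) / 2)) powr (- g / hb))"

end

theory Submission
  imports Defs "Jordan_Normal_Form.Determinant"
begin

text \<open>The kernel is the exponential of a separable sum, so every \<open>\<partial>/\<partial>x\<^sub>j\<close> acts on it as
multiplication by a logarithmic derivative (a sum of \<open>tanh\<close>'s). Hence both operators applied to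
the kernel give the kernel times \<open>(i\<mu>g/2)\<^sup>k \<Sigma>\<^sub>k\<close> of explicit real matrices \<open>X\<close> (\<open>N\<times>N\<close>) and \<open>Y\<close>
(\<open>(N-1)\<times>(N-1)\<close>). The addition theorems for \<open>sinh\<close> and \<open>cosh\<close> show \<open>X C = C Y\<^sup>T\<close> for the
Cauchy-like matrix \<open>C = (sech(\<mu>(x\<^sub>j - y\<^sub>n)/2))\<close>, which has full rank, and \<open>tr X = tr Y\<close>. Then
\<open>det(t + X) = t det(t + Y)\<close>, and comparing coefficients gives \<open>\<Sigma>\<^sub>N(X) = 0\<close> and
\<open>\<Sigma>\<^sub>k(X) = \<Sigma>\<^sub>k(Y)\<close> for \<open>k < N\<close>.\<close>

section \<open>Principal minors\<close>

definition det_on :: "nat set \<Rightarrow> (nat \<Rightarrow> nat \<Rightarrow> 'a::comm_ring_1) \<Rightarrow> 'a" where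
  "det_on I M = (\<Sum>\<sigma>\<in>{\<sigma>. \<sigma> permutes I}. of_int (sign \<sigma>) * (\<Prod>j\<in>I. M j (\<sigma> j)))"

definition principal_minor_sum :: "nat \<Rightarrow> nat \<Rightarrow> (nat \<Rightarrow> nat \<Rightarrow> 'a::comm_ring_1) \<Rightarrow> 'a" where
  "principal_minor_sum n k M = (\<Sum>I\<in>{I. I \<subseteq> {..<n} \<and> card I = k}. det_on I M)"

lemma permutes_fixing_eq:
  assumes "S \<subseteq> I"
  shows "{\<sigma>. \<sigma> permutes I \<and> (\<forall>j\<in>S. \<sigma> j = j)} = {\<sigma>. \<sigma> permutes (I - S)}"
proof -
  have "\<sigma> permutes (I - S)" if "\<sigma> permutes I" "\<forall>j\<in>S. \<sigma> j = j" for \<sigma>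
    using that unfolding permutes_def by (metis Diff_iff)
  moreover have "\<sigma> permutes I \<and> (\<forall>j\<in>S. \<sigma> j = j)" if "\<sigma> permutes (I - S)" for \<sigma>
    using permutes_subset[OF that, of I] permutes_not_in[OF that] by auto
  ultimately show ?thesis by blast
qed

lemma det_on_add_diag:
  fixes M :: "nat \<Rightarrow> nat \<Rightarrow> 'a::comm_ring_1"
  assumes "finite I"
  shows "det_on I (\<lambda>j l. M j l + (if j = l then q j else 0))
       = (\<Sum>S\<in>Pow I. (\<Prod>j\<in>S. q j) * det_on (I - S) M)"
proof -
  let ?P = "{\<sigma>. \<sigma> permutes I}"
  have fixing: "(\<Sum>\<sigma>\<in>?P. of_int (sign \<sigma>) *
        ((\<Prod>j\<in>S. if \<sigma> j = j then q j else 0) * (\<Prod>j\<in>I - S. M j (\<sigma> j))))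
      = (\<Prod>j\<in>S. q j) * det_on (I - S) M" if S: "S \<subseteq> I" for S
  proof -
    have diag: "(\<Prod>j\<in>S. if \<sigma> j = j then q j else 0)
        = (if \<forall>j\<in>S. \<sigma> j = j then \<Prod>j\<in>S. q j else 0)" for \<sigma>
    proof (cases "\<forall>j\<in>S. \<sigma> j = j")
      case False
      then show ?thesis using finite_subset[OF S assms] by (auto intro!: prod_zero)
    qed auto
    have "(\<Sum>\<sigma>\<in>?P. of_int (sign \<sigma>) *
        ((\<Prod>j\<in>S. if \<sigma> j = j then q j else 0) * (\<Prod>j\<in>I - S. M j (\<sigma> j))))
      = (\<Sum>\<sigma>\<in>?P. if \<forall>j\<in>S. \<sigma> j = j
          then (\<Prod>j\<in>S. q j) * (of_int (sign \<sigma>) * (\<Prod>j\<in>I - S. M j (\<sigma> j))) else 0)"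
      unfolding diag by (intro sum.cong) (auto simp: mult_ac)
    also have "\<dots> = (\<Sum>\<sigma>\<in>{\<sigma>\<in>?P. \<forall>j\<in>S. \<sigma> j = j}.
          (\<Prod>j\<in>S. q j) * (of_int (sign \<sigma>) * (\<Prod>j\<in>I - S. M j (\<sigma> j))))"
      by (rule sum.inter_filter[symmetric]) (simp add: finite_permutations[OF assms])
    also have "{\<sigma>\<in>?P. \<forall>j\<in>S. \<sigma> j = j} = {\<sigma>. \<sigma> permutes (I - S)}"
      using permutes_fixing_eq[OF S] by auto
    finally show ?thesis unfolding det_on_def by (simp add: sum_distrib_left)
  qed
  have "det_on I (\<lambda>j l. M j l + (if j = l then q j else 0))
      = (\<Sum>\<sigma>\<in>?P. of_int (sign \<sigma>) * (\<Prod>j\<in>I. (if \<sigma> j = j then q j else 0) + M j (\<sigma> j)))"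
    unfolding det_on_def by (intro sum.cong refl arg_cong2[where f="(*)"] prod.cong) (auto simp: add.commute)
  also have "\<dots> = (\<Sum>\<sigma>\<in>?P. \<Sum>S\<in>Pow I. of_int (sign \<sigma>) *
        ((\<Prod>j\<in>S. if \<sigma> j = j then q j else 0) * (\<Prod>j\<in>I - S. M j (\<sigma> j))))"
    by (simp add: prod_add[OF assms] sum_distrib_left)
  also have "\<dots> = (\<Sum>S\<in>Pow I. (\<Prod>j\<in>S. q j) * det_on (I - S) M)"
    by (subst sum.swap) (simp add: fixing)
  finally show ?thesis .
qed

lemma det_on_add_scalar:
  fixes M :: "nat \<Rightarrow> nat \<Rightarrow> 'a::comm_ring_1"
  shows "det_on {..<n} (\<lambda>j l. M j l + (if j = l then t else 0))
       = (\<Sum>k\<le>n. t ^ (n - k) * principal_minor_sum n k M)"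
proof -
  have "det_on {..<n} (\<lambda>j l. M j l + (if j = l then t else 0))
      = (\<Sum>S\<in>Pow {..<n}. t ^ card S * det_on ({..<n} - S) M)"
    by (simp add: det_on_add_diag)
  also have "\<dots> = (\<Sum>I\<in>Pow {..<n}. t ^ (n - card I) * det_on I M)"
  proof (rule sum.reindex_bij_witness[where i="\<lambda>I. {..<n} - I" and j="\<lambda>S. {..<n} - S"])
    fix I assume "I \<in> Pow {..<n}"
    then have "card I \<le> n" using card_mono[of "{..<n}" I] by auto
    with \<open>I \<in> Pow {..<n}\<close>
    show "t ^ (n - card ({..<n} - I)) * det_on ({..<n} - I) M = t ^ card I * det_on ({..<n} - I) M"
      by (simp add: card_Diff_subset finite_subset)
  qed auto
  also have "\<dots> = (\<Sum>k\<le>n. \<Sum>I\<in>{I\<in>Pow {..<n}. card I = k}. t ^ (n - card I) * det_on I M)"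
    by (rule sum.group[symmetric]) (auto simp: card_mono[of "{..<n}", simplified])
  also have "\<dots> = (\<Sum>k\<le>n. t ^ (n - k) * principal_minor_sum n k M)"
    unfolding principal_minor_sum_def by (auto simp: sum_distrib_left intro!: sum.cong)
  finally show ?thesis .
qed

lemma principal_minor_sum_scale:
  "principal_minor_sum n k (\<lambda>j l. c * M j l) = c ^ k * principal_minor_sum n k M"
proof -
  have "det_on I (\<lambda>j l. c * M j l) = c ^ card I * det_on I M" if "finite I" for I
    unfolding det_on_def using that by (simp add: sum_distrib_left prod.distrib mult_ac)
  then show ?thesis
    unfolding principal_minor_sum_def by (auto simp: sum_distrib_left finite_subset intro!: sum.cong)
qed

lemma of_real_principal_minor_sum:
  "principal_minor_sum n k (\<lambda>j l. of_real (M j l) :: 'a::{real_algebra_1, comm_ring_1})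
   = of_real (principal_minor_sum n k M)"
  unfolding principal_minor_sum_def det_on_def by (simp add: of_real_sum of_real_prod)

lemma det_on_eq_det: "det_on {..<n} M = det (mat n n (\<lambda>(i,j). M i j))"
proof -
  have "det (mat n n (\<lambda>(i,j). M i j)) =
     (\<Sum>p\<in>{p. p permutes {..<n}}. of_int (sign p) * (\<Prod>i<n. mat n n (\<lambda>(i,j). M i j) $$ (i, p i)))"
    by (subst det_def') (auto simp: atLeast0LessThan)
  also have "\<dots> = det_on {..<n} M"
    unfolding det_on_def using permutes_in_image by (fastforce intro!: sum.cong prod.cong)
  finally show ?thesis by simp
qed

section \<open>Matrices intertwined by a rectangular matrix\<close>

lemma index_mult_mat_sum:
  assumes "X \<in> carrier_mat n k" "Y \<in> carrier_mat k l" "i < n" "j < l"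
  shows "(X * Y) $$ (i,j) = (\<Sum>q<k. X $$ (i,q) * Y $$ (q,j))"
  using assms by (auto simp: scalar_prod_def atLeast0LessThan intro!: sum.cong)

definition trace_mat :: "'a::semiring_0 mat \<Rightarrow> 'a" where
  "trace_mat X = (\<Sum>i<dim_row X. X $$ (i,i))"

lemma trace_mat_mult_comm:
  fixes X Y :: "'a::comm_semiring_0 mat"
  assumes "X \<in> carrier_mat n k" "Y \<in> carrier_mat k n"
  shows "trace_mat (X * Y) = trace_mat (Y * X)"
proof -
  have "trace_mat (X * Y) = (\<Sum>i<n. \<Sum>q<k. X $$ (i,q) * Y $$ (q,i))"
    unfolding trace_mat_def using assms by (intro sum.cong refl index_mult_mat_sum) auto
  also have "\<dots> = (\<Sum>q<k. \<Sum>i<n. Y $$ (q,i) * X $$ (i,q))"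
    by (subst sum.swap) (simp add: mult.commute)
  also have "\<dots> = trace_mat (Y * X)"
    unfolding trace_mat_def using assms by (intro sum.cong refl index_mult_mat_sum[symmetric]) auto
  finally show ?thesis .
qed

lemma
  fixes F H A :: "'a::idom mat"
  assumes F: "F \<in> carrier_mat n n" and H: "H \<in> carrier_mat n n" and A: "A \<in> carrier_mat n n"
    and detF: "det F \<noteq> 0" and FH: "F * H = A * F"
  shows det_add_scalar_intertwined: "det (A + t \<cdot>\<^sub>m 1\<^sub>m n) = det (H + t \<cdot>\<^sub>m 1\<^sub>m n)"
    and trace_mat_intertwined: "trace_mat H = trace_mat A"
proof -
  have "F * (t \<cdot>\<^sub>m 1\<^sub>m n) = (t \<cdot>\<^sub>m 1\<^sub>m n) * F"
    using F by (simp add: mult_smult_distrib[of _ n n _ n] mult_smult_assoc_mat[of _ n n _ n])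
  then have "F * (H + t \<cdot>\<^sub>m 1\<^sub>m n) = (A + t \<cdot>\<^sub>m 1\<^sub>m n) * F"
    using F H A FH by (simp add: mult_add_distrib_mat[of _ n n] add_mult_distrib_mat[of _ n n])
  then have "det F * det (H + t \<cdot>\<^sub>m 1\<^sub>m n) = det (A + t \<cdot>\<^sub>m 1\<^sub>m n) * det F"
    using F H A by (metis det_mult add_carrier_mat one_carrier_mat smult_carrier_mat)
  with detF show "det (A + t \<cdot>\<^sub>m 1\<^sub>m n) = det (H + t \<cdot>\<^sub>m 1\<^sub>m n)" by simp
  note adj = adj_mat[OF F]
  have "det F * trace_mat H = trace_mat ((adj_mat F * F) * H)"
    using adj H by (simp add: mult_smult_assoc_mat[of _ n n _ n] trace_mat_def sum_distrib_left)
  also have "(adj_mat F * F) * H = adj_mat F * (A * F)"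
    using adj F H FH by (subst assoc_mult_mat[of _ n n _ n _ n]) auto
  also have "trace_mat \<dots> = trace_mat ((A * F) * adj_mat F)"
    using adj A F by (intro trace_mat_mult_comm) auto
  also have "(A * F) * adj_mat F = A * (F * adj_mat F)"
    using adj A F by (subst assoc_mult_mat[of _ n n _ n _ n]) auto
  also have "trace_mat \<dots> = det F * trace_mat A"
    using adj A by (simp add: mult_smult_distrib[of _ n n _ n] trace_mat_def sum_distrib_left)
  finally show "trace_mat H = trace_mat A" using detF by simp
qed

lemma mult_adj_mat_solve:
  fixes F X :: "'a::field mat"
  assumes F: "F \<in> carrier_mat n n" and X: "X \<in> carrier_mat n k" and detF: "det F \<noteq> 0"
  shows "F * ((1 / det F) \<cdot>\<^sub>m (adj_mat F * X)) = X"
proof -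
  note adj = adj_mat[OF F]
  have "F * ((1 / det F) \<cdot>\<^sub>m (adj_mat F * X)) = (1 / det F) \<cdot>\<^sub>m ((F * adj_mat F) * X)"
    using adj F X by (simp add: mult_smult_distrib[of _ n n _ k] assoc_mult_mat[of F n n _ n X k, symmetric])
  also have "(F * adj_mat F) * X = det F \<cdot>\<^sub>m X"
    using adj X by (simp add: mult_smult_assoc_mat[of _ n n _ k])
  also have "(1 / det F) \<cdot>\<^sub>m (det F \<cdot>\<^sub>m X) = X"
    using detF by (intro eq_matI) auto
  finally show ?thesis .
qed

text \<open>If \<open>A C = C B\<^sup>T\<close> for an \<open>(m+1)\<times>m\<close> matrix \<open>C\<close> of full rank, then completing \<open>C\<close> by the
last unit vector to an invertible \<open>F\<close> makes \<open>F\<^sup>-\<^sup>1 A F\<close> block upper triangular with diagonal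
blocks \<open>B\<^sup>T\<close> and \<open>tr A - tr B\<close>.\<close>

lemma det_on_add_scalar_intertwined:
  fixes A B C :: "nat \<Rightarrow> nat \<Rightarrow> 'a::field"
  assumes inter: "\<And>j n. j < Suc m \<Longrightarrow> n < m \<Longrightarrow> (\<Sum>l<Suc m. A j l * C l n) = (\<Sum>q<m. C j q * B n q)"
    and detC: "det (mat m m (\<lambda>(i,j). C i j)) \<noteq> 0"
    and trace: "(\<Sum>j<Suc m. A j j) = (\<Sum>n<m. B n n)"
  shows "det_on {..<Suc m} (\<lambda>j l. A j l + (if j = l then t else 0))
       = t * det_on {..<m} (\<lambda>j l. B j l + (if j = l then t else 0))"
proof -
  define N where "N = Suc m"
  define AA where "AA = mat N N (\<lambda>(i,j). A i j)"
  define F where "F = mat N N (\<lambda>(i,j). if j < m then C i j else if i = m then 1 else 0)"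
  have AA: "AA \<in> carrier_mat N N" and F: "F \<in> carrier_mat N N" by (auto simp: AA_def F_def)
  have "F = four_block_mat (mat m m (\<lambda>(i,j). C i j)) (0\<^sub>m m 1) (mat 1 m (\<lambda>(i,j). C m j)) (1\<^sub>m 1)"
    by (rule eq_matI) (auto simp: F_def N_def less_Suc_eq)
  then have detF: "det F \<noteq> 0"
    using detC by (simp add: det_four_block_mat_upper_right_zero[of _ m _ 1])
  define G where "G = (1 / det F) \<cdot>\<^sub>m (adj_mat F * (AA * F))"
  have FG: "F * G = AA * F"
    unfolding G_def using AA F detF by (intro mult_adj_mat_solve) auto
  have G: "G \<in> carrier_mat N N" using adj_mat(1)[OF F] AA F by (simp add: G_def)
  define H where "H = mat N N (\<lambda>(i,j). if j < m then (if i < m then B j i else 0) else G $$ (i, m))"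
  have H: "H \<in> carrier_mat N N" by (simp add: H_def)
  have FH: "F * H = AA * F"
  proof (rule eq_matI)
    fix i j assume "i < dim_row (AA * F)" "j < dim_col (AA * F)"
    then have i: "i < N" and j: "j < N" using AA F by auto
    show "(F * H) $$ (i,j) = (AA * F) $$ (i,j)"
    proof (cases "j < m")
      case True
      have "(F * H) $$ (i,j) = (\<Sum>q<N. F $$ (i,q) * H $$ (q,j))"
        using F H i j by (rule index_mult_mat_sum)
      also have "\<dots> = (\<Sum>q<m. C i q * B j q)"
        using True i j by (simp add: F_def H_def N_def)
      also have "\<dots> = (\<Sum>l<N. AA $$ (i,l) * F $$ (l,j))"
        using inter[of i j] True i j by (simp add: AA_def F_def N_def)
      also have "\<dots> = (AA * F) $$ (i,j)"
        using AA F i j by (rule index_mult_mat_sum[symmetric])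
      finally show ?thesis .
    next
      case False
      then have "j = m" using j by (simp add: N_def)
      have "(F * H) $$ (i,j) = (\<Sum>q<N. F $$ (i,q) * H $$ (q,j))"
        using F H i j by (rule index_mult_mat_sum)
      also have "\<dots> = (\<Sum>q<N. F $$ (i,q) * G $$ (q,j))"
        using \<open>j = m\<close> by (intro sum.cong refl) (auto simp: H_def N_def)
      also have "\<dots> = (F * G) $$ (i,j)"
        using F G i j by (rule index_mult_mat_sum[symmetric])
      finally show ?thesis using FG by simp
    qed
  qed (use AA F H in auto)
  have "G $$ (m, m) = 0"
    using trace_mat_intertwined[OF F H AA detF FH] trace
    by (simp add: trace_mat_def H_def AA_def N_def)
  then have "H + t \<cdot>\<^sub>m 1\<^sub>m N = four_block_mat
      (transpose_mat (mat m m (\<lambda>(i,j). B i j + (if i = j then t else 0))))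
      (mat m 1 (\<lambda>(i,j). G $$ (i,m))) (0\<^sub>m 1 m) (mat 1 1 (\<lambda>_. t))"
    by (intro eq_matI) (auto simp: H_def N_def less_Suc_eq)
  then have "det (H + t \<cdot>\<^sub>m 1\<^sub>m N) = det (mat m m (\<lambda>(i,j). B i j + (if i = j then t else 0))) * t"
    by (simp add: det_four_block_mat_lower_left_zero[of _ m _ 1] det_transpose[of _ m] det_def'[of _ 1])
  moreover have "mat N N (\<lambda>(i,j). A i j + (if i = j then t else 0)) = AA + t \<cdot>\<^sub>m 1\<^sub>m N"
    by (rule eq_matI) (auto simp: AA_def)
  ultimately show ?thesis
    using det_add_scalar_intertwined[OF F H AA detF FH, of t]
    unfolding det_on_eq_det N_def by (simp add: mult.commute)
qed

corollary principal_minor_sums_intertwined: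
  fixes A B C :: "nat \<Rightarrow> nat \<Rightarrow> 'a::real_normed_field"
  assumes inter: "\<And>j n. j < Suc m \<Longrightarrow> n < m \<Longrightarrow> (\<Sum>l<Suc m. A j l * C l n) = (\<Sum>q<m. C j q * B n q)"
    and detC: "det (mat m m (\<lambda>(i,j). C i j)) \<noteq> 0"
    and trace: "(\<Sum>j<Suc m. A j j) = (\<Sum>n<m. B n n)"
  shows "principal_minor_sum (Suc m) (Suc m) A = 0"
    and "\<And>k. 1 \<le> k \<Longrightarrow> k \<le> m \<Longrightarrow> principal_minor_sum (Suc m) k A = principal_minor_sum m k B"
proof -
  define c where "c i = principal_minor_sum (Suc m) (Suc m - i) A" for i
  define d where "d i = (if i = 0 then 0 else principal_minor_sum m (Suc m - i) B)" for i
  have reverse: "(\<Sum>k\<le>n. t ^ (n - k) * f k) = (\<Sum>i\<le>n. f (n - i) * t ^ i)" for n t and f :: "nat \<Rightarrow> 'a"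
    by (rule sum.reindex_bij_witness[where i="\<lambda>k. n - k" and j="\<lambda>k. n - k"]) auto
  have "(\<Sum>i\<le>Suc m. c i * t ^ i) = (\<Sum>i\<le>Suc m. d i * t ^ i)" for t
  proof -
    have "(\<Sum>i\<le>Suc m. c i * t ^ i) = t * (\<Sum>i\<le>m. principal_minor_sum m (m - i) B * t ^ i)"
      using det_on_add_scalar_intertwined[OF inter detC trace, of t]
      unfolding det_on_add_scalar reverse c_def .
    also have "\<dots> = (\<Sum>i\<le>Suc m. d i * t ^ i)"
      by (subst sum.atMost_Suc_shift) (simp add: sum_distrib_left d_def mult_ac)
    finally show ?thesis .
  qed
  then have cd: "c i = d i" if "i \<le> Suc m" for i
    using polyfun_eq_coeffs[of c "Suc m" d] that by blast
  show "principal_minor_sum (Suc m) (Suc m) A = 0" using cd[of 0] by (simp add: c_def d_def)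
  fix k assume "1 \<le> k" "k \<le> m"
  then show "principal_minor_sum (Suc m) k A = principal_minor_sum m k B"
    using cd[of "Suc m - k"] by (simp add: c_def d_def Suc_diff_le)
qed

section \<open>Nonsingularity of Cauchy matrices\<close>

lemma cauchy_kernel_trivial:
  fixes X Y w :: "nat \<Rightarrow> 'a::field"
  assumes X: "inj_on X {..<m}" and Y: "inj_on Y {..<m}"
    and nonzero: "\<And>i n. i < m \<Longrightarrow> n < m \<Longrightarrow> X i + Y n \<noteq> 0"
    and vanish: "\<And>i. i < m \<Longrightarrow> (\<Sum>n<m. w n / (X i + Y n)) = 0"
    and n: "n < m"
  shows "w n = 0"
proof -
  \<comment> \<open>Clearing denominators gives a polynomial of degree \<open>< m\<close> vanishing at the \<open>m\<close> points \<open>X i\<close>.\<close>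
  define P where "P = (\<Sum>n<m. Polynomial.smult (w n) (\<Prod>q\<in>{..<m} - {n}. [:Y q, 1:]))"
  have poly_P: "poly P z = (\<Sum>n<m. w n * (\<Prod>q\<in>{..<m} - {n}. Y q + z))" for z
    by (simp add: P_def poly_sum poly_prod)
  have "degree P \<le> m - 1"
    unfolding P_def
  proof (rule degree_sum_le)
    fix n assume "n \<in> {..<m}"
    then have "degree (\<Prod>q\<in>{..<m} - {n}. [:Y q, 1:]) \<le> m - 1"
      using degree_prod_sum_le[of "{..<m} - {n}" "\<lambda>q. [:Y q, 1:]"] by (simp add: o_def)
    then show "degree (Polynomial.smult (w n) (\<Prod>q\<in>{..<m} - {n}. [:Y q, 1:])) \<le> m - 1"
      using degree_smult_le order.trans by blast
  qed simp
  then have degree_P: "degree P < m" using n by linarith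
  have "poly P (X i) = 0" if i: "i < m" for i
  proof -
    have "poly P (X i) = (\<Sum>n<m. (\<Prod>q<m. X i + Y q) * (w n / (X i + Y n)))"
      unfolding poly_P
    proof (intro sum.cong refl)
      fix n assume "n \<in> {..<m}"
      then show "w n * (\<Prod>q\<in>{..<m} - {n}. Y q + X i) = (\<Prod>q<m. X i + Y q) * (w n / (X i + Y n))"
        using nonzero[OF i, of n] by (simp add: prod.remove[of _ n] add.commute)
    qed
    also have "\<dots> = (\<Prod>q<m. X i + Y q) * (\<Sum>n<m. w n / (X i + Y n))"
      by (simp only: sum_distrib_left)
    also have "\<dots> = 0" using vanish[OF i] by simp
    finally show ?thesis .
  qed
  then have "X ` {..<m} \<subseteq> {z. poly P z = 0}" by auto
  have "P = 0"
  proof (rule ccontr)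
    assume "P \<noteq> 0"
    have "card (X ` {..<m}) \<le> card {z. poly P z = 0}"
      using \<open>X ` {..<m} \<subseteq> {z. poly P z = 0}\<close> poly_roots_finite[OF \<open>P \<noteq> 0\<close>]
      by (rule card_mono[rotated])
    also have "\<dots> \<le> degree P" by (rule card_poly_roots_bound[OF \<open>P \<noteq> 0\<close>])
    finally show False using card_image[OF X] degree_P by simp
  qed
  have "0 = poly P (- Y n)" using \<open>P = 0\<close> by simp
  also have "\<dots> = w n * (\<Prod>q\<in>{..<m} - {n}. Y q - Y n)"
  proof -
    have "w n' * (\<Prod>q\<in>{..<m} - {n'}. Y q + - Y n) = 0" if "n' \<in> {..<m} - {n}" for n'
    proof -
      have "(\<Prod>q\<in>{..<m} - {n'}. Y q + - Y n) = 0"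
        using that n by (intro prod_zero) (auto intro!: bexI[of _ n])
      then show ?thesis by simp
    qed
    then show ?thesis unfolding poly_P using n by (simp add: sum.remove[of _ n] sum.neutral)
  qed
  finally show "w n = 0"
    using Y n by (auto dest: inj_onD)
qed

lemma sech_eq_cauchy:
  fixes mu a b :: real
  shows "1 / cosh (mu * (a - b) / 2) = 2 * exp (mu * a / 2) * exp (mu * b / 2) / (exp (mu * a) + exp (mu * b))"
proof -
  define u v where "u = mu * a / 2" and "v = mu * b / 2"
  have "exp (mu * a) = exp u * exp u" "exp (mu * b) = exp v * exp v"
    by (simp_all add: u_def v_def exp_add[symmetric])
  moreover have "cosh (mu * (a - b) / 2) = (exp u * exp u + exp v * exp v) / (2 * exp u * exp v)"
  proof -
    have "mu * (a - b) / 2 = u - v" by (simp add: u_def v_def field_simps)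
    also have "cosh (u - v) = (exp u / exp v + exp v / exp u) / 2"
      by (simp add: cosh_field_def exp_diff)
    finally show ?thesis by (simp add: field_simps)
  qed
  ultimately show ?thesis by (simp add: u_def v_def)
qed

lemma det_sech_matrix_nonzero:
  fixes mu :: real and x y :: "nat \<Rightarrow> real"
  assumes mu: "mu > 0" and x: "inj_on x {..<m}" and y: "inj_on y {..<m}"
  shows "det (mat m m (\<lambda>(i,n). 1 / cosh (mu * (x i - y n) / 2))) \<noteq> 0"
proof
  let ?C = "mat m m (\<lambda>(i,n). 1 / cosh (mu * (x i - y n) / 2))"
  assume "det ?C = 0"
  then obtain v where v: "v \<in> carrier_vec m" "v \<noteq> 0\<^sub>v m" "?C *\<^sub>v v = 0\<^sub>v m"
    using det_0_iff_vec_prod_zero[of ?C m] by auto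
  define w where "w n = v $ n * exp (mu * y n / 2)" for n
  have "w n = 0" if "n < m" for n
  proof (rule cauchy_kernel_trivial[where X="\<lambda>i. exp (mu * x i)" and Y="\<lambda>n. exp (mu * y n)"])
    show "inj_on (\<lambda>i. exp (mu * x i)) {..<m}" "inj_on (\<lambda>n. exp (mu * y n)) {..<m}"
      using x y mu by (auto simp: inj_on_def)
    show "exp (mu * x i) + exp (mu * y n) \<noteq> 0" for i n
      using exp_gt_zero[of "mu * x i"] exp_gt_zero[of "mu * y n"] by linarith
    fix i assume "i < m"
    then have "(\<Sum>n<m. 1 / cosh (mu * (x i - y n) / 2) * v $ n) = 0"
      using arg_cong[OF v(3), of "\<lambda>u. u $ i"] v(1) by (simp add: scalar_prod_def atLeast0LessThan)
    moreover have "1 / cosh (mu * (x i - y n) / 2) * v $ n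
        = 2 * exp (mu * x i / 2) * (w n / (exp (mu * x i) + exp (mu * y n)))" for n
      unfolding sech_eq_cauchy w_def by simp
    ultimately have "2 * exp (mu * x i / 2) * (\<Sum>n<m. w n / (exp (mu * x i) + exp (mu * y n))) = 0"
      by (simp add: sum_distrib_left)
    then show "(\<Sum>n<m. w n / (exp (mu * x i) + exp (mu * y n))) = 0" by simp
  qed fact
  then have "v = 0\<^sub>v m" using v(1) by (intro eq_vecI) (auto simp: w_def)
  with v(2) show False ..
qed

section \<open>Hyperbolic matrices attached to the kernel\<close>

lemma inverse_sinh_cosh_eq:
  fixes u v :: real
  assumes "u \<noteq> 0"
  shows "1 / (sinh u * cosh v) = (coth u + tanh v) / cosh (u + v)"
proof -
  have "sinh u \<noteq> 0" "cosh v \<noteq> 0" "cosh (u + v) \<noteq> 0"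
    using assms cosh_real_pos[of v] cosh_real_pos[of "u + v"] by auto
  moreover from this have "coth u + tanh v = cosh (u + v) / (sinh u * cosh v)"
    unfolding coth_def tanh_def cosh_add by (simp add: divide_simps)
  ultimately show ?thesis by simp
qed

lemma inverse_sinh_cosh_add_eq:
  fixes u v :: real
  assumes "u \<noteq> 0"
  shows "1 / (sinh u * cosh (u + v)) = (coth u - tanh (u + v)) / cosh v"
proof -
  have "sinh u \<noteq> 0" "cosh v \<noteq> 0" "cosh (u + v) \<noteq> 0"
    using assms cosh_real_pos[of v] cosh_real_pos[of "u + v"] by auto
  moreover have "cosh v = cosh (u + v) * cosh u - sinh (u + v) * sinh u"
    using cosh_add[of "u + v" "- u"] by simp
  ultimately have "coth u - tanh (u + v) = cosh v / (sinh u * cosh (u + v))"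
    unfolding coth_def tanh_def by (simp add: divide_simps)
  with \<open>cosh v \<noteq> 0\<close> show ?thesis by simp
qed

lemma coth_minus: "coth (- t) = - coth t"
  by (simp add: coth_def)

lemma sum_antisymmetric_offdiag:
  fixes f :: "nat \<Rightarrow> nat \<Rightarrow> real"
  assumes "finite A" and antisym: "\<And>i j. f i j = - f j i"
  shows "(\<Sum>i\<in>A. \<Sum>j\<in>A - {i}. f i j) = 0"
proof -
  have "(\<Sum>i\<in>A. \<Sum>j\<in>A - {i}. f i j) = (\<Sum>i\<in>A. \<Sum>j\<in>{j\<in>A. i \<noteq> j}. f i j)"
    by (intro sum.cong) auto
  also have "\<dots> = (\<Sum>j\<in>A. \<Sum>i\<in>{i\<in>A. i \<noteq> j}. f i j)"
    using assms(1) by (rule sum.swap_restrict[OF _ assms(1)])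
  also have "\<dots> = (\<Sum>j\<in>A. \<Sum>i\<in>A - {j}. - f j i)"
    by (intro sum.cong) (auto intro: antisym)
  also have "\<dots> = - (\<Sum>j\<in>A. \<Sum>i\<in>A - {j}. f j i)"
    by (simp add: sum_negf)
  finally show ?thesis by simp
qed

text \<open>Up to the factor \<open>i\<mu>g/2\<close>, \<open>lax_x\<close> is \<open>(L\<^sub>n\<^sub>r + E)(x, p)\<close> with each \<open>p\<^sub>j\<close> replaced by the
eigenvalue of \<open>-i\<hbar>\<partial>/\<partial>x\<^sub>j\<close> on the kernel; \<open>lax_y\<close> is the same for \<open>(L\<^sub>n\<^sub>r + E)(-y, p)\<close> with \<open>p\<^sub>n\<close> the
eigenvalue of \<open>i\<hbar>\<partial>/\<partial>y\<^sub>n\<close>.\<close>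

definition lax_x :: "nat \<Rightarrow> real \<Rightarrow> (nat \<Rightarrow> real) \<Rightarrow> (nat \<Rightarrow> real) \<Rightarrow> nat \<Rightarrow> nat \<Rightarrow> real" where
  "lax_x N mu x y j l =
     (if j = l then (\<Sum>q<N - 1. tanh (mu * (x j - y q) / 2)) - (\<Sum>l'\<in>{..<N} - {j}. coth (mu * (x j - x l') / 2))
      else 1 / sinh (mu * (x j - x l) / 2))"

definition lax_y :: "nat \<Rightarrow> real \<Rightarrow> (nat \<Rightarrow> real) \<Rightarrow> (nat \<Rightarrow> real) \<Rightarrow> nat \<Rightarrow> nat \<Rightarrow> real" where
  "lax_y N mu x y n l =
     (if n = l then (\<Sum>i<N. tanh (mu * (x i - y n) / 2)) + (\<Sum>l'\<in>{..<N - 1} - {n}. coth (mu * (y n - y l') / 2))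
      else - (1 / sinh (mu * (y n - y l) / 2)))"

lemma trace_lax_x_eq_trace_lax_y:
  "(\<Sum>j<Suc m. lax_x (Suc m) mu x y j j) = (\<Sum>n<m. lax_y (Suc m) mu x y n n)"
proof -
  have coth_antisym: "coth (mu * (a - b) / 2) = - coth (mu * (b - a) / 2)" for a b
  proof -
    have "mu * (a - b) / 2 = - (mu * (b - a) / 2)" by (simp add: field_simps)
    then show ?thesis by (simp only: coth_minus)
  qed
  have "(\<Sum>j<Suc m. \<Sum>l\<in>{..<Suc m} - {j}. coth (mu * (x j - x l) / 2)) = 0"
       "(\<Sum>n<m. \<Sum>l\<in>{..<m} - {n}. coth (mu * (y n - y l) / 2)) = 0"
    by (rule sum_antisymmetric_offdiag, simp, rule coth_antisym)+
  then have "(\<Sum>j<Suc m. lax_x (Suc m) mu x y j j) = (\<Sum>j<Suc m. \<Sum>q<m. tanh (mu * (x j - y q) / 2))"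
    and "(\<Sum>n<m. lax_y (Suc m) mu x y n n) = (\<Sum>q<m. \<Sum>j<Suc m. tanh (mu * (x j - y q) / 2))"
    by (simp_all add: lax_x_def lax_y_def sum_subtractf sum.distrib del: sum.lessThan_Suc)
  then show ?thesis by (simp add: sum.swap[of _ "{..<Suc m}"] del: sum.lessThan_Suc)
qed


lemma lax_intertwined:
  fixes mu :: real and x y :: "nat \<Rightarrow> real"
  assumes mu: "mu > 0" and x: "inj_on x {..<Suc m}" and y: "inj_on y {..<m}"
    and j: "j < Suc m" and n: "n < m"
  shows "(\<Sum>l<Suc m. lax_x (Suc m) mu x y j l * (1 / cosh (mu * (x l - y n) / 2)))
       = (\<Sum>q<m. (1 / cosh (mu * (x j - y q) / 2)) * lax_y (Suc m) mu x y n q)"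
proof -
  define w where "w = mu * (x j - y n) / 2"
  define T1 where "T1 = (\<Sum>l\<in>{..<Suc m} - {j}. tanh (mu * (x l - y n) / 2))"
  define T2 where "T2 = (\<Sum>q\<in>{..<m} - {n}. tanh (mu * (x j - y q) / 2))"
  define Cx where "Cx = (\<Sum>l\<in>{..<Suc m} - {j}. coth (mu * (x j - x l) / 2))"
  define Cy where "Cy = (\<Sum>q\<in>{..<m} - {n}. coth (mu * (y n - y q) / 2))"
  have "(\<Sum>l\<in>{..<Suc m} - {j}. lax_x (Suc m) mu x y j l * (1 / cosh (mu * (x l - y n) / 2)))
      = (\<Sum>l\<in>{..<Suc m} - {j}. (coth (mu * (x j - x l) / 2) + tanh (mu * (x l - y n) / 2)) / cosh w)"
  proof (intro sum.cong refl)
    fix l assume l: "l \<in> {..<Suc m} - {j}"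
    then have "mu * (x j - x l) / 2 \<noteq> 0" using x j mu by (auto dest: inj_onD)
    moreover have "mu * (x j - x l) / 2 + mu * (x l - y n) / 2 = w" by (simp add: w_def field_simps)
    ultimately show "lax_x (Suc m) mu x y j l * (1 / cosh (mu * (x l - y n) / 2))
        = (coth (mu * (x j - x l) / 2) + tanh (mu * (x l - y n) / 2)) / cosh w"
      using l inverse_sinh_cosh_eq by (simp add: lax_x_def)
  qed
  also have "\<dots> = (Cx + T1) / cosh w"
    by (simp add: Cx_def T1_def sum.distrib sum_divide_distrib[symmetric])
  moreover have "lax_x (Suc m) mu x y j j = tanh w + T2 - Cx"
    using n by (simp add: lax_x_def w_def T2_def Cx_def sum.remove[of "{..<m}" n])
  ultimately have L: "(\<Sum>l<Suc m. lax_x (Suc m) mu x y j l * (1 / cosh (mu * (x l - y n) / 2)))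
      = (tanh w + T2 + T1) / cosh w"
    using j by (simp add: sum.remove[of "{..<Suc m}" j] w_def add_divide_distrib diff_divide_distrib
        del: sum.lessThan_Suc)
  have "(\<Sum>q\<in>{..<m} - {n}. (1 / cosh (mu * (x j - y q) / 2)) * lax_y (Suc m) mu x y n q)
      = (\<Sum>q\<in>{..<m} - {n}. (tanh (mu * (x j - y q) / 2) - coth (mu * (y n - y q) / 2)) / cosh w)"
  proof (intro sum.cong refl)
    fix q assume q: "q \<in> {..<m} - {n}"
    define a where "a = mu * (y n - y q) / 2"
    have "a \<noteq> 0" using q y n mu by (auto simp: a_def dest: inj_onD)
    have b: "mu * (x j - y q) / 2 = a + w" by (simp add: a_def w_def field_simps)
    have "(1 / cosh (a + w)) * lax_y (Suc m) mu x y n q = - (1 / (sinh a * cosh (a + w)))"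
      using q by (simp add: lax_y_def a_def)
    also have "\<dots> = (tanh (a + w) - coth a) / cosh w"
      using inverse_sinh_cosh_add_eq[OF \<open>a \<noteq> 0\<close>, of w] by (simp add: minus_divide_left)
    finally show "(1 / cosh (mu * (x j - y q) / 2)) * lax_y (Suc m) mu x y n q
        = (tanh (mu * (x j - y q) / 2) - coth (mu * (y n - y q) / 2)) / cosh w"
      unfolding b a_def[symmetric] .
  qed
  also have "\<dots> = (T2 - Cy) / cosh w"
    by (simp add: Cy_def T2_def sum_subtractf sum_divide_distrib[symmetric])
  moreover have "lax_y (Suc m) mu x y n n = tanh w + T1 + Cy"
    using j by (simp add: lax_y_def w_def T1_def Cy_def sum.remove[of "{..<Suc m}" j] del: sum.lessThan_Suc)
  ultimately have R: "(\<Sum>q<m. (1 / cosh (mu * (x j - y q) / 2)) * lax_y (Suc m) mu x y n q)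
      = (tanh w + T2 + T1) / cosh w"
    using n by (simp add: sum.remove[of "{..<m}" n] w_def add_divide_distrib diff_divide_distrib)
  show ?thesis using L R by simp
qed

section \<open>The operators applied to the kernel\<close>

lemma has_real_derivative_ln_two_cosh:
  assumes "(f has_real_derivative f') (at u)"
  shows "((\<lambda>u. ln (2 * cosh (f u))) has_real_derivative f' * tanh (f u)) (at u)"
proof -
  have pos: "2 * cosh (f u) > 0" using cosh_real_pos[of "f u"] by simp
  then have "((\<lambda>u. ln (2 * cosh (f u))) has_real_derivative
      1 / (2 * cosh (f u)) * (2 * (sinh (f u) * f'))) (at u)"
    using assms by (auto intro!: derivative_eq_intros)
  then show ?thesis using pos by (simp add: tanh_def field_simps)
qed

lemma pdiff_exp_sum_mult:
  fixes \<psi> \<psi>' :: "nat \<Rightarrow> real \<Rightarrow> real" and Q :: "(nat \<Rightarrow> real) \<Rightarrow> complex"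
  assumes "finite Ms" "s \<in> Ms" and der: "(\<psi> s has_real_derivative \<psi>' s (x s)) (at (x s))"
    and Q: "\<And>t. Q (x(s := t)) = Q x"
  shows "pdiff s (\<lambda>x. of_real (exp (\<Sum>m\<in>Ms. \<psi> m (x m))) * Q x) x
       = of_real (exp (\<Sum>m\<in>Ms. \<psi> m (x m))) * (of_real (\<psi>' s (x s)) * Q x)"
proof -
  define R where "R = (\<Sum>m\<in>Ms - {s}. \<psi> m (x m))"
  have split: "(\<Sum>m\<in>Ms. \<psi> m ((x(s := t)) m)) = \<psi> s t + R" for t
  proof -
    have "(\<Sum>m\<in>Ms - {s}. \<psi> m ((x(s := t)) m)) = R" unfolding R_def by (intro sum.cong) auto
    then show ?thesis using assms(1,2) by (simp add: sum.remove[of _ s])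
  qed
  have "((\<lambda>t. of_real (exp (\<psi> s t + R)) * Q x) has_vector_derivative
      of_real (exp (\<psi> s (x s) + R) * \<psi>' s (x s)) * Q x) (at (x s))"
    by (intro has_vector_derivative_mult_left has_vector_derivative_of_real)
       (auto intro!: derivative_eq_intros der)
  moreover have "exp (\<psi> s (x s) + R) = exp (\<Sum>m\<in>Ms. \<psi> m (x m))"
    using split[of "x s"] by simp
  ultimately show ?thesis
    unfolding pdiff_def split Q by (simp add: vector_derivative_at mult_ac)
qed

lemma pdiffs_exp_sum:
  fixes \<psi> \<psi>' :: "nat \<Rightarrow> real \<Rightarrow> real"
  assumes fin: "finite Ms" and der: "\<And>j u. (\<psi> j has_real_derivative \<psi>' j u) (at u)"
    and S: "S \<subseteq> Ms"
  shows "pdiffs S (\<lambda>x. of_real (exp (\<Sum>m\<in>Ms. \<psi> m (x m)))) x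
     = of_real (exp (\<Sum>m\<in>Ms. \<psi> m (x m))) * (\<Prod>j\<in>S. of_real (\<psi>' j (x j)))"
proof -
  have "foldr pdiff l (\<lambda>x. of_real (exp (\<Sum>m\<in>Ms. \<psi> m (x m))))
     = (\<lambda>x. of_real (exp (\<Sum>m\<in>Ms. \<psi> m (x m))) * (\<Prod>j\<in>set l. of_real (\<psi>' j (x j))))"
    if "distinct l" "set l \<subseteq> Ms" for l
    using that
  proof (induction l)
    case (Cons s ss)
    have "pdiff s (\<lambda>x. of_real (exp (\<Sum>m\<in>Ms. \<psi> m (x m))) * (\<Prod>j\<in>set ss. of_real (\<psi>' j (x j)))) x
        = of_real (exp (\<Sum>m\<in>Ms. \<psi> m (x m))) * (of_real (\<psi>' s (x s)) * (\<Prod>j\<in>set ss. of_real (\<psi>' j (x j))))"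
      for x
      using Cons.prems by (intro pdiff_exp_sum_mult[OF fin _ der]) (auto intro!: prod.cong)
    with Cons show ?case by auto
  qed simp
  then show ?thesis
    unfolding pdiffs_def using S finite_subset[OF S fin] by simp
qed

lemma K1_eq_exp_sum:
  "K1 hb mu g N x y = of_real (exp (\<Sum>m<N. \<Sum>n<N - 1. - g / hb * ln (2 * cosh (mu * (x m - y n) / 2))))"
proof -
  have "(2 * cosh (mu * (x m - y n) / 2)) powr (- g / hb)
      = exp (- g / hb * ln (2 * cosh (mu * (x m - y n) / 2)))" for m n
    using cosh_real_pos[of "mu * (x m - y n) / 2"] by (simp add: powr_def mult.commute)
  then show ?thesis unfolding K1_def by (simp add: exp_sum)
qed

definition lax0 :: "real \<Rightarrow> real \<Rightarrow> nat \<Rightarrow> (nat \<Rightarrow> real) \<Rightarrow> nat \<Rightarrow> nat \<Rightarrow> complex" where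
  "lax0 mu g n x j l = (if j = l then zE mu g n x j else Lnr_off mu g x j l)"

lemma sum_sigma_coeff_monomials:
  "(\<Sum>S\<in>Pow {..<n}. sigma_coeff mu g n k S x * (\<Prod>j\<in>S. p j))
   = principal_minor_sum n k (\<lambda>j l. lax0 mu g n x j l + (if j = l then p j else 0))"
proof -
  let ?I = "{I. I \<subseteq> {..<n} \<and> card I = k}"
  have coeff: "sigma_coeff mu g n k S x = (\<Sum>I\<in>{I\<in>?I. S \<subseteq> I}. det_on (I - S) (lax0 mu g n x))" for S
    unfolding sigma_coeff_def det_on_def lax0_def
    by (intro sum.cong) (auto simp: permutes_fixing_eq intro!: sum.cong prod.cong)
  have "(\<Sum>S\<in>Pow {..<n}. sigma_coeff mu g n k S x * (\<Prod>j\<in>S. p j))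
      = (\<Sum>S\<in>Pow {..<n}. \<Sum>I\<in>{I\<in>?I. S \<subseteq> I}. (\<Prod>j\<in>S. p j) * det_on (I - S) (lax0 mu g n x))"
    unfolding coeff sum_distrib_right by (simp add: mult.commute)
  also have "\<dots> = (\<Sum>I\<in>?I. \<Sum>S\<in>{S\<in>Pow {..<n}. S \<subseteq> I}. (\<Prod>j\<in>S. p j) * det_on (I - S) (lax0 mu g n x))"
    by (rule sum.swap_restrict) (auto intro: finite_subset[of _ "Pow {..<n}"])
  also have "\<dots> = (\<Sum>I\<in>?I. \<Sum>S\<in>Pow I. (\<Prod>j\<in>S. p j) * det_on (I - S) (lax0 mu g n x))"
    by (intro sum.cong refl) auto
  also have "\<dots> = principal_minor_sum n k (\<lambda>j l. lax0 mu g n x j l + (if j = l then p j else 0))"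
    unfolding principal_minor_sum_def
    by (intro sum.cong refl det_on_add_diag[symmetric]) (auto intro: finite_subset)
  finally show ?thesis .
qed

lemma sigma_op_eigen:
  assumes "\<And>S. S \<subseteq> {..<n} \<Longrightarrow> pdiffs S f x = f x * (\<Prod>j\<in>S. d j)"
  shows "sigma_op hb mu g n k f x
       = f x * principal_minor_sum n k (\<lambda>j l. lax0 mu g n x j l + (if j = l then - \<i> * hb * d j else 0))"
proof -
  have const: "(\<Prod>j\<in>S. c * d j) = c ^ card S * (\<Prod>j\<in>S. d j)" for c S
    by (simp add: prod.distrib)
  have "sigma_op hb mu g n k f x = f x * (\<Sum>S\<in>Pow {..<n}. sigma_coeff mu g n k S x * (\<Prod>j\<in>S. - \<i> * hb * d j))"
    unfolding sigma_op_def sum_distrib_left const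
    by (intro sum.cong refl) (simp add: assms mult_ac)
  then show ?thesis by (simp only: sum_sigma_coeff_monomials)
qed

lemma sigma_op_neg_eigen:
  assumes "\<And>S. S \<subseteq> {..<n} \<Longrightarrow> pdiffs S f y = f y * (\<Prod>j\<in>S. d j)"
  shows "sigma_op_neg hb mu g n k f y
       = f y * principal_minor_sum n k (\<lambda>j l. lax0 mu g n (\<lambda>j. - y j) j l + (if j = l then \<i> * hb * d j else 0))"
proof -
  have const: "(\<Prod>j\<in>S. c * d j) = c ^ card S * (\<Prod>j\<in>S. d j)" for c S
    by (simp add: prod.distrib)
  have sign: "(- \<i> * hb) ^ c * ((-1) ^ c * z) = (\<i> * hb) ^ c * z" for c and z :: complex
    by (simp add: power_mult_distrib[symmetric])
  have "sigma_op_neg hb mu g n k f y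
      = f y * (\<Sum>S\<in>Pow {..<n}. sigma_coeff mu g n k S (\<lambda>j. - y j) * (\<Prod>j\<in>S. \<i> * hb * d j))"
    unfolding sigma_op_neg_def sum_distrib_left const
    by (intro sum.cong refl) (simp only: mult.assoc sign, simp add: assms mult_ac)
  then show ?thesis by (simp only: sum_sigma_coeff_monomials)
qed

lemma Lnr_off_eq: "Lnr_off mu g x j l = \<i> * of_real (mu * g) / 2 * of_real (1 / sinh (mu * (x j - x l) / 2))"
proof (cases "sinh (mu * (x j - x l) / 2) = 0")
  case False
  then have "complex_of_real (sinh (mu * (x j - x l) / 2)) \<noteq> 0" by simp
  then show ?thesis unfolding Lnr_off_def of_real_mult of_real_divide by (simp add: field_simps)
qed (simp add: Lnr_off_def)

lemma zE_eq:
  "zE mu g n x j = - (\<i> * of_real (mu * g) / 2) * of_real (\<Sum>l\<in>{..<n} - {j}. coth (mu * (x j - x l) / 2))"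
  unfolding zE_def by (simp add: of_real_sum)

lemma sigma_op_K1:
  assumes "hb \<noteq> 0"
  shows "sigma_op hb mu g N k (\<lambda>x'. K1 hb mu g N x' y) x
       = K1 hb mu g N x y * ((\<i> * of_real (mu * g) / 2) ^ k * of_real (principal_minor_sum N k (lax_x N mu x y)))"
proof -
  define \<psi> where "\<psi> j u = (\<Sum>n<N - 1. - g / hb * ln (2 * cosh (mu * (u - y n) / 2)))" for j :: nat and u
  define \<psi>' where "\<psi>' j u = (\<Sum>n<N - 1. - g / hb * (mu / 2 * tanh (mu * (u - y n) / 2)))" for j :: nat and u
  have "(\<psi> j has_real_derivative \<psi>' j u) (at u)" for j u
    unfolding \<psi>_def \<psi>'_def
    by (intro DERIV_sum DERIV_cmult has_real_derivative_ln_two_cosh) (auto intro!: derivative_eq_intros)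
  then have "pdiffs S (\<lambda>x'. K1 hb mu g N x' y) x = K1 hb mu g N x y * (\<Prod>j\<in>S. of_real (\<psi>' j (x j)))"
    if "S \<subseteq> {..<N}" for S
    using pdiffs_exp_sum[of "{..<N}" \<psi> \<psi>' S x] that unfolding K1_eq_exp_sum \<psi>_def by simp
  then have "sigma_op hb mu g N k (\<lambda>x'. K1 hb mu g N x' y) x = K1 hb mu g N x y * principal_minor_sum N k
      (\<lambda>j l. lax0 mu g N x j l + (if j = l then - \<i> * hb * of_real (\<psi>' j (x j)) else 0))"
    by (rule sigma_op_eigen)
  also have "(\<lambda>j l. lax0 mu g N x j l + (if j = l then - \<i> * hb * of_real (\<psi>' j (x j)) else 0))
      = (\<lambda>j l. \<i> * of_real (mu * g) / 2 * of_real (lax_x N mu x y j l))"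
  proof (intro ext)
    fix j l
    have hb_\<psi>': "hb * \<psi>' j (x j) = - (mu * g / 2 * (\<Sum>n<N - 1. tanh (mu * (x j - y n) / 2)))"
      unfolding \<psi>'_def using assms by (simp add: sum_distrib_left sum_negf field_simps)
    have "- \<i> * hb * of_real (\<psi>' j (x j)) = - \<i> * of_real (hb * \<psi>' j (x j))"
      by simp
    also have "\<dots> = \<i> * of_real (mu * g / 2 * (\<Sum>n<N - 1. tanh (mu * (x j - y n) / 2)))"
      unfolding hb_\<psi>' of_real_minus by simp
    also have "\<dots> = \<i> * of_real (mu * g) / 2 * of_real (\<Sum>n<N - 1. tanh (mu * (x j - y n) / 2))"
      by (simp add: mult_ac)
    finally have diag: "- \<i> * hb * of_real (\<psi>' j (x j))
        = \<i> * of_real (mu * g) / 2 * of_real (\<Sum>n<N - 1. tanh (mu * (x j - y n) / 2))" .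
    show "lax0 mu g N x j l + (if j = l then - \<i> * hb * of_real (\<psi>' j (x j)) else 0)
        = \<i> * of_real (mu * g) / 2 * of_real (lax_x N mu x y j l)"
      unfolding lax0_def lax_x_def zE_eq Lnr_off_eq diag by (simp add: algebra_simps del: of_real_sum)
  qed
  finally show ?thesis unfolding principal_minor_sum_scale of_real_principal_minor_sum .
qed

lemma sigma_op_neg_K1:
  assumes "hb \<noteq> 0"
  shows "sigma_op_neg hb mu g (N - 1) k (\<lambda>y'. K1 hb mu g N x y') y
       = K1 hb mu g N x y * ((\<i> * of_real (mu * g) / 2) ^ k * of_real (principal_minor_sum (N - 1) k (lax_y N mu x y)))"
proof -
  define \<psi> where "\<psi> n v = (\<Sum>m<N. - g / hb * ln (2 * cosh (mu * (x m - v) / 2)))" for n :: nat and v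
  define \<psi>' where "\<psi>' n v = (\<Sum>m<N. - g / hb * (- (mu / 2) * tanh (mu * (x m - v) / 2)))" for n :: nat and v
  have "(\<psi> n has_real_derivative \<psi>' n v) (at v)" for n v
    unfolding \<psi>_def \<psi>'_def
    by (intro DERIV_sum DERIV_cmult has_real_derivative_ln_two_cosh) (auto intro!: derivative_eq_intros)
  then have "pdiffs S (\<lambda>y'. K1 hb mu g N x y') y = K1 hb mu g N x y * (\<Prod>n\<in>S. of_real (\<psi>' n (y n)))"
    if "S \<subseteq> {..<N - 1}" for S
    using pdiffs_exp_sum[of "{..<N - 1}" \<psi> \<psi>' S y] that
    unfolding K1_eq_exp_sum sum.swap[of _ "{..<N}"] \<psi>_def by simp
  then have "sigma_op_neg hb mu g (N - 1) k (\<lambda>y'. K1 hb mu g N x y') y = K1 hb mu g N x y * principal_minor_sum (N - 1) k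
      (\<lambda>j l. lax0 mu g (N - 1) (\<lambda>j. - y j) j l + (if j = l then \<i> * hb * of_real (\<psi>' j (y j)) else 0))"
    by (rule sigma_op_neg_eigen)
  also have "(\<lambda>j l. lax0 mu g (N - 1) (\<lambda>j. - y j) j l + (if j = l then \<i> * hb * of_real (\<psi>' j (y j)) else 0))
      = (\<lambda>j l. \<i> * of_real (mu * g) / 2 * of_real (lax_y N mu x y j l))"
  proof (intro ext)
    fix j l
    have hb_\<psi>': "hb * \<psi>' j (y j) = mu * g / 2 * (\<Sum>m<N. tanh (mu * (x m - y j) / 2))"
      unfolding \<psi>'_def using assms by (simp add: sum_distrib_left field_simps)
    have "\<i> * hb * of_real (\<psi>' j (y j)) = \<i> * of_real (hb * \<psi>' j (y j))"
      by simp
    also have "\<dots> = \<i> * of_real (mu * g) / 2 * of_real (\<Sum>m<N. tanh (mu * (x m - y j) / 2))"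
      unfolding hb_\<psi>' by (simp add: mult_ac)
    finally have diag: "\<i> * hb * of_real (\<psi>' j (y j))
        = \<i> * of_real (mu * g) / 2 * of_real (\<Sum>m<N. tanh (mu * (x m - y j) / 2))" .
    have reflect: "mu * (- a - - b) / 2 = - (mu * (a - b) / 2)" for a b :: real
      by (simp add: field_simps)
    show "lax0 mu g (N - 1) (\<lambda>j. - y j) j l + (if j = l then \<i> * hb * of_real (\<psi>' j (y j)) else 0)
        = \<i> * of_real (mu * g) / 2 * of_real (lax_y N mu x y j l)"
      unfolding lax0_def lax_y_def zE_eq Lnr_off_eq diag reflect coth_minus
      by (simp add: algebra_simps sum_negf del: of_real_sum)
  qed
  finally show ?thesis unfolding principal_minor_sum_scale of_real_principal_minor_sum .
qed

theorem proposition4p5: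
  fixes hb mu g :: real and N :: nat and x y :: "nat \<Rightarrow> real"
  assumes "hb > 0" and "mu > 0" and "g > 0" and "N \<ge> 1"
    and "inj_on x {..<N}" and "inj_on y {..<N - 1}"
  shows "sigma_op hb mu g N N (\<lambda>x'. K1 hb mu g N x' y) x = 0
     \<and> (\<forall>k\<in>{1..N - 1}.
          sigma_op hb mu g N k (\<lambda>x'. K1 hb mu g N x' y) x
          - sigma_op_neg hb mu g (N - 1) k (\<lambda>y'. K1 hb mu g N x y') y = 0)"
proof -
  obtain m where N: "N = Suc m" using assms(4) by (cases N) auto
  have x: "inj_on x {..<Suc m}" and y: "inj_on y {..<m}" using assms(5,6) N by auto
  have "inj_on x {..<m}" by (rule inj_on_subset[OF x]) auto
  note minors = principal_minor_sums_intertwined[OF lax_intertwined[OF assms(2) x y]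
      det_sech_matrix_nonzero[OF assms(2) this y] trace_lax_x_eq_trace_lax_y]
  have "hb \<noteq> 0" using assms(1) by simp
  show ?thesis
    unfolding sigma_op_K1[OF \<open>hb \<noteq> 0\<close>] sigma_op_neg_K1[OF \<open>hb \<noteq> 0\<close>] N
    using minors by simp
qed

end
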